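(* Every instance of Crossing Cost Multi-Agent Routing (CC-MAR) admits a (pure) Nash equilibrium. Moreover, any Nash dynamics (sequence of improving moves) starting from any strategy profile reaches a Nash equilibrium after at most $w_{\max}k^2|E|$ steps, where $w_{\max}$ is the maximum edge weight, $k$ the number of agents, and $|E|$ the number of undirected edges.
   Context: A mixed graph $G=(V,E,A)$ has a set $E\subseteq\binom{V}{2}$ of undirected edges and a set $A\subseteq V\times V$ of arcs; each edge $e\in E$ has a positive integer weight $w_e$. A path is a sequence of pairwise distinct vertices $v_1,\dots,v_m$ such that for each $i<m$ either $\{v_i,v_{i+1}\}\in E$ or $(v_i,v_{i+1})\in A$; it traverses an edge $\{v_i,v_{i+1}\}\in E$ in the direction from $v_i$ to $v_{i+1}$. A CC-MAR instance is $\Gamma=(G,\mathcal{T})$ where $\mathcal{T}$ is a multiset of $k$ pairs $(s_i,t_i)\in V\times V$ (agents $i\in[k]$); it is assumed that for each $i$ an $s_i$-$t_i$ path exists. A strategy profile is $\mathcal{P}=\{P_1,\dots,P_k\}$ with $P_i$ an $s_i$-$t_i$ path. For an edge $\{u,v\}\in E$ let $x_{uv}$ be the number of paths of $\mathcal{P}$ traversing it from $u$ to $v$. The individual cost of agent $i$ is $\mathrm{cost}_{\mathcal{P}}(P_i)=\sum w_{uv}x_{vu}$, summed over the edges $\{u,v\}\in E$ that $P_i$ traverses from $u$ to $v$ (i.e., the weighted number of other paths using that edge in the opposite direction). The total cost is $\mathrm{cost}(\mathcal{P})=\sum_{\{u,v\}\in E}w_{uv}x_{uv}x_{vu}$. A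 Nash equilibrium is a profile in which no agent can strictly decrease its individual cost by replacing its own path by another $s_i$-$t_i$ path while the others stay fixed. A Nash dynamics step replaces the path of some agent by one giving it strictly smaller individual cost. *)

theory Defs
  imports Main
begin

definition mixed_graph :: "'v set \<Rightarrow> 'v set set \<Rightarrow> ('v \<times> 'v) set \<Rightarrow> bool" where
  "mixed_graph V E A \<longleftrightarrow> finite V \<and> (\<forall>e\<in>E. e \<subseteq> V \<and> card e = 2) \<and> A \<subseteq> V \<times> V"

definition is_path :: "'v set \<Rightarrow> 'v set set \<Rightarrow> ('v \<times> 'v) set \<Rightarrow> 'v \<Rightarrow> 'v \<Rightarrow> 'v list \<Rightarrow> bool" where
  "is_path V E A s t p \<longleftrightarrow> p \<noteq> [] \<and> distinct p \<and> set p \<subseteq> V \<and> hd p = s \<and> last p = t \<and>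
     (\<forall>i. Suc i < length p \<longrightarrow> {p ! i, p ! Suc i} \<in> E \<or> (p ! i, p ! Suc i) \<in> A)"

definition traverses :: "'v set set \<Rightarrow> 'v list \<Rightarrow> 'v \<Rightarrow> 'v \<Rightarrow> bool" where
  "traverses E p u v \<longleftrightarrow> {u, v} \<in> E \<and> (\<exists>i. Suc i < length p \<and> p ! i = u \<and> p ! Suc i = v)"

definition flow :: "'v set set \<Rightarrow> nat \<Rightarrow> (nat \<Rightarrow> 'v list) \<Rightarrow> 'v \<Rightarrow> 'v \<Rightarrow> nat" where
  "flow E k P u v = card {j. j < k \<and> traverses E (P j) u v}"

definition valid_profile ::
  "'v set \<Rightarrow> 'v set set \<Rightarrow> ('v \<times> 'v) set \<Rightarrow> nat \<Rightarrow> (nat \<Rightarrow> 'v) \<Rightarrow> (nat \<Rightarrow> 'v) \<Rightarrow> (nat \<Rightarrow> 'v list) \<Rightarrow> bool" where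
  "valid_profile V E A k s t P \<longleftrightarrow> (\<forall>i<k. is_path V E A (s i) (t i) (P i))"

definition indiv_cost ::
  "'v set set \<Rightarrow> ('v set \<Rightarrow> nat) \<Rightarrow> nat \<Rightarrow> (nat \<Rightarrow> 'v list) \<Rightarrow> nat \<Rightarrow> nat" where
  "indiv_cost E w k P i =
     (\<Sum>j<length (P i) - 1.
        if {P i ! j, P i ! Suc j} \<in> E
        then w {P i ! j, P i ! Suc j} * flow E k P (P i ! Suc j) (P i ! j)
        else 0)"

definition improving_step ::
  "'v set \<Rightarrow> 'v set set \<Rightarrow> ('v \<times> 'v) set \<Rightarrow> ('v set \<Rightarrow> nat) \<Rightarrow> nat \<Rightarrow> (nat \<Rightarrow> 'v) \<Rightarrow> (nat \<Rightarrow> 'v)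
     \<Rightarrow> (nat \<Rightarrow> 'v list) \<Rightarrow> (nat \<Rightarrow> 'v list) \<Rightarrow> bool" where
  "improving_step V E A w k s t P P' \<longleftrightarrow>
     (\<exists>i<k. \<exists>Q. is_path V E A (s i) (t i) Q \<and> P' = P(i := Q) \<and>
        indiv_cost E w k P' i < indiv_cost E w k P i)"

definition nash_equilibrium ::
  "'v set \<Rightarrow> 'v set set \<Rightarrow> ('v \<times> 'v) set \<Rightarrow> ('v set \<Rightarrow> nat) \<Rightarrow> nat \<Rightarrow> (nat \<Rightarrow> 'v) \<Rightarrow> (nat \<Rightarrow> 'v)
     \<Rightarrow> (nat \<Rightarrow> 'v list) \<Rightarrow> bool" where
  "nash_equilibrium V E A w k s t P \<longleftrightarrow> valid_profile V E A k s t P \<and>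
     (\<forall>i<k. \<forall>Q. is_path V E A (s i) (t i) Q \<longrightarrow> indiv_cost E w k P i \<le> indiv_cost E w k (P(i := Q)) i)"

definition nash_dynamics ::
  "'v set \<Rightarrow> 'v set set \<Rightarrow> ('v \<times> 'v) set \<Rightarrow> ('v set \<Rightarrow> nat) \<Rightarrow> nat \<Rightarrow> (nat \<Rightarrow> 'v) \<Rightarrow> (nat \<Rightarrow> 'v)
     \<Rightarrow> (nat \<Rightarrow> nat \<Rightarrow> 'v list) \<Rightarrow> nat \<Rightarrow> bool" where
  "nash_dynamics V E A w k s t seq n \<longleftrightarrow> valid_profile V E A k s t (seq 0) \<and>
     (\<forall>m<n. improving_step V E A w k s t (seq m) (seq (Suc m)))"

definition w_max :: "'v set set \<Rightarrow> ('v set \<Rightarrow> nat) \<Rightarrow> nat" where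
  "w_max E w = (if E = {} then 0 else Max (w ` E))"

end

theory Submission
  imports Defs
begin

text \<open>Counting every undirected edge in both orientations, the potential
  \<Phi>(P) = \<Sum> w{u,v} x_uv x_vu is twice the total cost.  Since a simple path never
  traverses an edge in both directions, \<Phi> splits as the potential of the other agents
  plus twice the individual cost of agent i.  Hence every improving move lowers \<Phi> by
  at least 2, while 0 \<le> \<Phi> \<le> 2 w_max k^2 |E|.  So Nash dynamics terminate within
  w_max k^2 |E| steps, and they can only stop at a Nash equilibrium.\<close>

definition oriented_edges :: "'v set set \<Rightarrow> ('v \<times> 'v) set" where
  "oriented_edges E = {(u, v). {u, v} \<in> E}"

definition flow_without :: "'v set set \<Rightarrow> nat \<Rightarrow> (nat \<Rightarrow> 'v list) \<Rightarrow> nat \<Rightarrow> 'v \<Rightarrow> 'v \<Rightarrow> nat" where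
  "flow_without E k P i u v = card {j. j < k \<and> j \<noteq> i \<and> traverses E (P j) u v}"

definition potential :: "'v set set \<Rightarrow> ('v set \<Rightarrow> nat) \<Rightarrow> nat \<Rightarrow> (nat \<Rightarrow> 'v list) \<Rightarrow> nat" where
  "potential E w k P = (\<Sum>(u, v)\<in>oriented_edges E. w {u, v} * flow E k P u v * flow E k P v u)"

definition potential_without ::
  "'v set set \<Rightarrow> ('v set \<Rightarrow> nat) \<Rightarrow> nat \<Rightarrow> (nat \<Rightarrow> 'v list) \<Rightarrow> nat \<Rightarrow> nat" where
  "potential_without E w k P i =
     (\<Sum>(u, v)\<in>oriented_edges E. w {u, v} * flow_without E k P i u v * flow_without E k P i v u)"

lemma orientations_doubleton: "{(u, v). {u, v} = {a, b}} = {(a, b), (b, a)}"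
  by (auto simp: doubleton_eq_iff)

lemma orientations_eq_empty: "\<nexists>a b. e = {a, b} \<Longrightarrow> {(u, v). {u, v} = e} = {}"
  by auto

lemma finite_orientations: "finite {(u, v). {u, v} = e}"
proof (cases "\<exists>a b. e = {a, b}")
  case True
  then show ?thesis by (auto simp: orientations_doubleton)
qed (simp add: orientations_eq_empty)

lemma card_orientations_le: "card {(u, v). {u, v} = e} \<le> 2"
proof (cases "\<exists>a b. e = {a, b}")
  case True
  then show ?thesis by (auto simp: orientations_doubleton card_insert_le_m1)
qed (simp add: orientations_eq_empty)

lemma oriented_edges_eq_UN: "oriented_edges E = (\<Union>e\<in>E. {(u, v). {u, v} = e})"
  unfolding oriented_edges_def by auto

lemma finite_oriented_edges: "finite E \<Longrightarrow> finite (oriented_edges E)"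
  unfolding oriented_edges_eq_UN by (simp add: finite_orientations)

lemma card_oriented_edges_le:
  assumes "finite E"
  shows "card (oriented_edges E) \<le> 2 * card E"
proof -
  have "card (oriented_edges E) \<le> (\<Sum>e\<in>E. card {(u, v). {u, v} = e})"
    unfolding oriented_edges_eq_UN using assms by (rule card_UN_le)
  also have "\<dots> \<le> (\<Sum>e\<in>E. 2)"
    by (intro sum_mono card_orientations_le)
  finally show ?thesis by simp
qed

lemma sum_oriented_edges_swap:
  "(\<Sum>(u, v)\<in>oriented_edges E. f u v) = (\<Sum>(u, v)\<in>oriented_edges E. f v u)"
proof -
  have "prod.swap ` oriented_edges E = oriented_edges E"
    unfolding oriented_edges_def by (auto simp: insert_commute image_iff)
  moreover have "(\<Sum>(u, v)\<in>oriented_edges E. f v u) = (\<Sum>(u, v)\<in>prod.swap ` oriented_edges E. f u v)"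
    by (subst sum.reindex) (auto simp: case_prod_beta)
  ultimately show ?thesis by simp
qed

lemma finite_edges_if_mixed_graph:
  assumes "mixed_graph V E A"
  shows "finite E"
proof -
  have "E \<subseteq> Pow V" "finite V"
    using assms unfolding mixed_graph_def by auto
  then show ?thesis
    by (simp add: finite_subset)
qed

lemma flow_le: "flow E k P u v \<le> k"
proof -
  have "{j. j < k \<and> traverses E (P j) u v} \<subseteq> {..<k}" by auto
  then show ?thesis
    unfolding flow_def by (metis card_lessThan card_mono finite_lessThan)
qed

lemma flow_eq_flow_without:
  assumes "i < k"
  shows "flow E k P u v = flow_without E k P i u v + of_bool (traverses E (P i) u v)"
proof (cases "traverses E (P i) u v")
  case True
  then have "{j. j < k \<and> traverses E (P j) u v} =
      insert i {j. j < k \<and> j \<noteq> i \<and> traverses E (P j) u v}"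
    using assms by auto
  then show ?thesis
    unfolding flow_def flow_without_def using True by simp
next
  case False
  then have "{j. j < k \<and> traverses E (P j) u v} = {j. j < k \<and> j \<noteq> i \<and> traverses E (P j) u v}"
    by auto
  then show ?thesis
    unfolding flow_def flow_without_def using False by simp
qed

lemma flow_without_fun_upd [simp]: "flow_without E k (P(i := Q)) i = flow_without E k P i"
  unfolding flow_without_def by (intro ext arg_cong[where f = card]) auto

lemma potential_without_fun_upd [simp]:
  "potential_without E w k (P(i := Q)) i = potential_without E w k P i"
  unfolding potential_without_def by simp

lemma distinct_not_traverses_both:
  assumes "distinct p" "traverses E p u v"
  shows "\<not> traverses E p v u"
proof
  assume "traverses E p v u"
  then obtain b where b: "Suc b < length p" "p ! b = v" "p ! Suc b = u"
    unfolding traverses_def by auto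
  obtain a where a: "Suc a < length p" "p ! a = u" "p ! Suc a = v"
    using assms(2) unfolding traverses_def by auto
  have "a = Suc b" "b = Suc a"
    using a b assms(1) by (metis Suc_lessD nth_eq_iff_index_eq)+
  then show False by simp
qed

lemma sum_path_edges_eq_sum_traversed:
  fixes h :: "'v \<Rightarrow> 'v \<Rightarrow> 'a::comm_monoid_add"
  assumes "distinct p" "finite E"
  shows "(\<Sum>j<length p - 1. if {p ! j, p ! Suc j} \<in> E then h (p ! j) (p ! Suc j) else 0)
       = (\<Sum>(u, v)\<in>oriented_edges E. if traverses E p u v then h u v else 0)"
proof -
  define J where "J = {j. j < length p - 1 \<and> {p ! j, p ! Suc j} \<in> E}"
  define step where "step j = (p ! j, p ! Suc j)" for j
  have "(\<Sum>j<length p - 1. if {p ! j, p ! Suc j} \<in> E then h (p ! j) (p ! Suc j) else 0)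
      = (\<Sum>j\<in>J. h (p ! j) (p ! Suc j))"
    unfolding J_def by (simp add: sum.inter_filter[symmetric] lessThan_def)
  also have "\<dots> = (\<Sum>(u, v)\<in>step ` J. h u v)"
  proof -
    have "inj_on step J"
      unfolding inj_on_def J_def step_def using assms(1) nth_eq_iff_index_eq by fastforce
    then show ?thesis
      by (simp add: sum.reindex) (simp add: step_def)
  qed
  also have "step ` J = {x \<in> oriented_edges E. traverses E p (fst x) (snd x)}"
    unfolding J_def step_def oriented_edges_def traverses_def by force
  also have "(\<Sum>(u, v)\<in>\<dots>. h u v) = (\<Sum>(u, v)\<in>oriented_edges E. if traverses E p u v then h u v else 0)"
    using finite_oriented_edges[OF assms(2)]
    by (simp add: sum.inter_filter[symmetric] case_prod_beta)
  finally show ?thesis .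
qed

lemma indiv_cost_eq_sum_oriented_edges:
  assumes "distinct (P i)" "i < k" "finite E"
  shows "indiv_cost E w k P i =
    (\<Sum>(u, v)\<in>oriented_edges E. w {u, v} * of_bool (traverses E (P i) u v) * flow_without E k P i v u)"
proof -
  have "indiv_cost E w k P i = (\<Sum>(u, v)\<in>oriented_edges E.
      if traverses E (P i) u v then w {u, v} * flow E k P v u else 0)"
    unfolding indiv_cost_def
    by (rule sum_path_edges_eq_sum_traversed[OF assms(1,3), of "\<lambda>u v. w {u, v} * flow E k P v u"])
  also have "\<dots> = (\<Sum>(u, v)\<in>oriented_edges E.
      w {u, v} * of_bool (traverses E (P i) u v) * flow_without E k P i v u)"
    by (intro sum.cong)
      (auto simp: flow_eq_flow_without[OF assms(2)] distinct_not_traverses_both[OF assms(1)])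
  finally show ?thesis .
qed

lemma potential_eq_potential_without:
  assumes "distinct (P i)" "i < k" "finite E"
  shows "potential E w k P = potential_without E w k P i + 2 * indiv_cost E w k P i"
proof -
  let ?g = "flow_without E k P i" and ?c = "\<lambda>u v. of_bool (traverses E (P i) u v) :: nat"
  have "?c u v * ?c v u = 0" for u v
    using distinct_not_traverses_both[OF assms(1)] by simp
  then have "potential E w k P = (\<Sum>(u, v)\<in>oriented_edges E.
      w {u, v} * ?g u v * ?g v u + w {u, v} * ?c u v * ?g v u + w {u, v} * ?g u v * ?c v u)"
    unfolding potential_def flow_eq_flow_without[OF assms(2)]
    by (intro sum.cong) (auto simp: algebra_simps)
  also have "\<dots> = potential_without E w k P i + (\<Sum>(u, v)\<in>oriented_edges E. w {u, v} * ?c u v * ?g v u)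
      + (\<Sum>(u, v)\<in>oriented_edges E. w {u, v} * ?g u v * ?c v u)"
    unfolding potential_without_def by (simp add: sum.distrib case_prod_beta)
  also have "(\<Sum>(u, v)\<in>oriented_edges E. w {u, v} * ?g u v * ?c v u)
      = (\<Sum>(u, v)\<in>oriented_edges E. w {v, u} * ?g v u * ?c u v)"
    by (rule sum_oriented_edges_swap)
  also have "\<dots> = (\<Sum>(u, v)\<in>oriented_edges E. w {u, v} * ?c u v * ?g v u)"
    by (simp add: insert_commute mult.commute mult.left_commute)
  finally show ?thesis
    unfolding indiv_cost_eq_sum_oriented_edges[where P = P and i = i, OF assms] by simp
qed

lemma improving_step_valid_profile:
  "valid_profile V E A k s t P \<Longrightarrow> improving_step V E A w k s t P P' \<Longrightarrow> valid_profile V E A k s t P'"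
  unfolding improving_step_def valid_profile_def by auto

lemma improving_step_potential_decrease:
  assumes "finite E" "valid_profile V E A k s t P" "improving_step V E A w k s t P P'"
  shows "potential E w k P' + 2 \<le> potential E w k P"
proof -
  obtain i Q where i: "i < k" "P' = P(i := Q)" "indiv_cost E w k P' i < indiv_cost E w k P i"
    using assms(3) unfolding improving_step_def by blast
  have "distinct (P i)" "distinct (P' i)"
    using improving_step_valid_profile[OF assms(2,3)] assms(2) i(1)
    unfolding valid_profile_def is_path_def by auto
  then show ?thesis
    using potential_eq_potential_without[OF _ i(1) assms(1), of P w]
      potential_eq_potential_without[OF _ i(1) assms(1), of P' w] i(2,3)
    by simp
qed

lemma potential_le:
  assumes "finite E"
  shows "potential E w k P \<le> 2 * card E * (w_max E w * k * k)"
proof -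
  have edge_term_le: "w {u, v} * flow E k P u v * flow E k P v u \<le> w_max E w * k * k"
    if "(u, v) \<in> oriented_edges E" for u v
  proof -
    have "w {u, v} \<le> w_max E w"
      using that assms unfolding oriented_edges_def w_max_def by auto
    then show ?thesis
      using flow_le[of E k P u v] flow_le[of E k P v u] by (intro mult_le_mono)
  qed
  have "potential E w k P \<le> (\<Sum>_\<in>oriented_edges E. w_max E w * k * k)"
    unfolding potential_def using edge_term_le by (intro sum_mono) auto
  also have "\<dots> = card (oriented_edges E) * (w_max E w * k * k)"
    by simp
  also have "\<dots> \<le> 2 * card E * (w_max E w * k * k)"
    using card_oriented_edges_le[OF assms] by (intro mult_le_mono1)
  finally show ?thesis .
qed

lemma nash_dynamics_potential_decrease:
  assumes "finite E" "nash_dynamics V E A w k s t seq n" "m \<le> n"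
  shows "valid_profile V E A k s t (seq m) \<and> potential E w k (seq m) + 2 * m \<le> potential E w k (seq 0)"
  using assms(3)
proof (induction m)
  case 0
  then show ?case
    using assms(2) unfolding nash_dynamics_def by simp
next
  case (Suc m)
  have "improving_step V E A w k s t (seq m) (seq (Suc m))"
    using assms(2) Suc.prems unfolding nash_dynamics_def by simp
  then show ?case
    using Suc improving_step_valid_profile improving_step_potential_decrease[OF assms(1)]
    by fastforce
qed

lemma nash_dynamics_length_le:
  assumes "finite E" "nash_dynamics V E A w k s t seq n"
  shows "n \<le> w_max E w * k^2 * card E"
proof -
  have "2 * n \<le> potential E w k (seq 0)"
    using nash_dynamics_potential_decrease[OF assms order.refl] by simp
  also have "\<dots> \<le> 2 * (w_max E w * k^2 * card E)"
    using potential_le[OF assms(1)] by (simp add: power2_eq_square algebra_simps)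
  finally show ?thesis by simp
qed

lemma nash_dynamics_Cons:
  assumes "valid_profile V E A k s t P" "improving_step V E A w k s t P (seq 0)"
    "nash_dynamics V E A w k s t seq n"
  shows "nash_dynamics V E A w k s t (case_nat P seq) (Suc n)"
  using assms unfolding nash_dynamics_def by (auto simp: less_Suc_eq_0_disj)

lemma improving_step_if_not_nash_equilibrium:
  assumes "valid_profile V E A k s t P" "\<not> nash_equilibrium V E A w k s t P"
  shows "\<exists>P'. improving_step V E A w k s t P P'"
  using assms unfolding nash_equilibrium_def improving_step_def by (auto simp: not_le)

lemma nash_dynamics_reaching_equilibrium:
  assumes "finite E" "valid_profile V E A k s t P"
  shows "\<exists>seq n. seq 0 = P \<and> nash_dynamics V E A w k s t seq n \<and> nash_equilibrium V E A w k s t (seq n)"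
  using assms(2)
proof (induction "potential E w k P" arbitrary: P rule: less_induct)
  case less
  show ?case
  proof (cases "nash_equilibrium V E A w k s t P")
    case True
    then show ?thesis
      using less.prems by (intro exI[of _ "\<lambda>_. P"] exI[of _ 0]) (simp add: nash_dynamics_def)
  next
    case False
    then obtain P' where step: "improving_step V E A w k s t P P'"
      using improving_step_if_not_nash_equilibrium[OF less.prems] by blast
    have "potential E w k P' < potential E w k P"
      using improving_step_potential_decrease[OF assms(1) less.prems step] by simp
    moreover have "valid_profile V E A k s t P'"
      using improving_step_valid_profile[OF less.prems step] .
    ultimately obtain seq n where seq: "seq 0 = P'" "nash_dynamics V E A w k s t seq n"
        "nash_equilibrium V E A w k s t (seq n)"
      using less.hyps by blast
    then show ?thesis
      using nash_dynamics_Cons[OF less.prems] step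
      by (intro exI[of _ "case_nat P seq"] exI[of _ "Suc n"]) simp
  qed
qed

lemma exists_valid_profile:
  assumes "\<forall>i<k. \<exists>p. is_path V E A (s i) (t i) p"
  shows "\<exists>P. valid_profile V E A k s t P"
proof
  show "valid_profile V E A k s t (\<lambda>i. SOME p. is_path V E A (s i) (t i) p)"
    using assms unfolding valid_profile_def by (auto intro: someI_ex)
qed

theorem mainTheorem1:
  fixes V :: "'v set" and E :: "'v set set" and A :: "('v \<times> 'v) set"
    and w :: "'v set \<Rightarrow> nat" and k :: nat and s t :: "nat \<Rightarrow> 'v"
  assumes "mixed_graph V E A"
    and "\<forall>e\<in>E. w e > 0"
    and "\<forall>i<k. \<exists>p. is_path V E A (s i) (t i) p"
  shows "(\<exists>P. nash_equilibrium V E A w k s t P) \<and>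
    (\<forall>seq n. nash_dynamics V E A w k s t seq n \<longrightarrow> n \<le> w_max E w * k^2 * card E) \<and>
    (\<forall>P0. valid_profile V E A k s t P0 \<longrightarrow>
       (\<exists>seq n. seq 0 = P0 \<and> nash_dynamics V E A w k s t seq n \<and>
          nash_equilibrium V E A w k s t (seq n)))"
proof -
  have "finite E"
    using assms(1) by (rule finite_edges_if_mixed_graph)
  then have reach: "\<forall>P0. valid_profile V E A k s t P0 \<longrightarrow>
      (\<exists>seq n. seq 0 = P0 \<and> nash_dynamics V E A w k s t seq n \<and> nash_equilibrium V E A w k s t (seq n))"
    using nash_dynamics_reaching_equilibrium by blast
  moreover have "\<exists>P. nash_equilibrium V E A w k s t P"
    using reach exists_valid_profile[OF assms(3)] by blast
  moreover have "\<forall>seq n. nash_dynamics V E A w k s t seq n \<longrightarrow> n \<le> w_max E w * k^2 * card E"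
    using nash_dynamics_length_le[OF \<open>finite E\<close>] by blast
  ultimately show ?thesis by blast
qed

end
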